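(* Let $(A,\mu_A)$ and $(B,\mu_B)$ be associative algebras, $\alpha_A:A\to A$ and $\alpha_B:B\to B$ algebra maps, and $R:B\otimes A\to A\otimes B$ a twisting map satisfying $(\alpha_A\otimes\alpha_B)\circ R=R\circ(\alpha_B\otimes\alpha_A)$. Then $R$ is a Hom-twisting map between the Hom-associative algebras $A_{\alpha_A}$ and $B_{\alpha_B}$, and the Hom-associative algebras $A_{\alpha_A}\otimes_R B_{\alpha_B}$ and $(A\otimes_R B)_{\alpha_A\otimes\alpha_B}$ coincide.
   Context: Algebras over a field $k$, not assumed unital. A Hom-associative algebra is $(A,\mu,\alpha)$ with $\alpha(aa')=\alpha(a)\alpha(a')$ and $\alpha(a)(a'a'')=(aa')\alpha(a'')$. For an associative algebra $(A,\mu)$ and algebra endomorphism $\alpha$, $A_\alpha$ denotes the Hom-associative algebra $(A,\alpha\circ\mu,\alpha)$. A twisting map between associative algebras $A,B$ is a linear $R:B\otimes A\to A\otimes B$ with $R\circ(\mathrm{id}_B\otimes\mu_A)=(\mu_A\otimes\mathrm{id}_B)\circ(\mathrm{id}_A\otimes R)\circ(R\otimes\mathrm{id}_A)$ and $R\circ(\mu_B\otimes\mathrm{id}_A)=(\mathrm{id}_A\otimes\mu_B)\circ(R\otimes\mathrm{id}_B)\circ(\mathrm{id}_B\otimes R)$; the twisted tensor product $A\otimes_R B$ is the associative algebra $A\otimes B$ with product $(\mu_A\otimes\mu_B)\circ(\mathrm{id}_A\otimes R\otimes\mathrm{id}_B)$. For Hom-associative algebras $(A,\mu_A,\alpha_A),(B,\mu_B,\alpha_B)$,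 a Hom-twisting map is a linear $R:B\otimes A\to A\otimes B$ with $(\alpha_A\otimes\alpha_B)\circ R=R\circ(\alpha_B\otimes\alpha_A)$, $R\circ(\alpha_B\otimes\mu_A)=(\mu_A\otimes\alpha_B)\circ(\mathrm{id}_A\otimes R)\circ(R\otimes\mathrm{id}_A)$, $R\circ(\mu_B\otimes\alpha_A)=(\alpha_A\otimes\mu_B)\circ(R\otimes\mathrm{id}_B)\circ(\mathrm{id}_B\otimes R)$; the Hom-twisted tensor product $A\otimes_R B$ is $A\otimes B$ with product $(\mu_A\otimes\mu_B)\circ(\mathrm{id}_A\otimes R\otimes\mathrm{id}_B)$ and structure map $\alpha_A\otimes\alpha_B$. *)

theory Defs
  imports Complex_Main "HOL-Library.Poly_Mapping"
begin

text \<open>Elements of a tensor product V1 (x) ... (x) Vn are represented by finitely supported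
formal linear combinations of tuples, i.e. elements of ('v1 * ... * 'vn =>0 'k), modulo the
subspace spanned by the multilinearity relations.  A single tuple (x1,...,xn) with coefficient 1
is the pure tensor x1 (x) ... (x) xn.\<close>

definition fs_scale :: "'k::field \<Rightarrow> ('x \<Rightarrow>\<^sub>0 'k) \<Rightarrow> ('x \<Rightarrow>\<^sub>0 'k)" where
  "fs_scale c v = Poly_Mapping.map ((*) c) v"

definition fs_ext :: "('x \<Rightarrow> ('y \<Rightarrow>\<^sub>0 'k::field)) \<Rightarrow> ('x \<Rightarrow>\<^sub>0 'k) \<Rightarrow> ('y \<Rightarrow>\<^sub>0 'k)" where
  "fs_ext g v = (\<Sum>x\<in>Poly_Mapping.keys v. fs_scale (Poly_Mapping.lookup v x) (g x))"

definition pt2 :: "'a \<Rightarrow> 'b \<Rightarrow> ('a \<times> 'b \<Rightarrow>\<^sub>0 'k::field)" where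
  "pt2 x y = Poly_Mapping.single (x, y) 1"

definition tensor_rel ::
  "('k::field \<Rightarrow> 'a::ab_group_add \<Rightarrow> 'a) \<Rightarrow> ('k \<Rightarrow> 'b::ab_group_add \<Rightarrow> 'b) \<Rightarrow> ('a \<times> 'b \<Rightarrow>\<^sub>0 'k) set" where
  "tensor_rel sA sB =
     {pt2 (a + a') b - pt2 a b - pt2 a' b | a a' b. True}
   \<union> {pt2 a (b + b') - pt2 a b - pt2 a b' | a b b'. True}
   \<union> {pt2 (sA c a) b - Poly_Mapping.single (a, b) c | c a b. True}
   \<union> {pt2 a (sB c b) - Poly_Mapping.single (a, b) c | c a b. True}"

definition teq ::
  "('k::field \<Rightarrow> 'a::ab_group_add \<Rightarrow> 'a) \<Rightarrow> ('k \<Rightarrow> 'b::ab_group_add \<Rightarrow> 'b)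
   \<Rightarrow> ('a \<times> 'b \<Rightarrow>\<^sub>0 'k) \<Rightarrow> ('a \<times> 'b \<Rightarrow>\<^sub>0 'k) \<Rightarrow> bool" where
  "teq sA sB x y \<longleftrightarrow> x - y \<in> module.span fs_scale (tensor_rel sA sB)"

text \<open>A function on formal sums represents a linear map V1 (x) V2 -> W1 (x) W2 iff it respects
the tensor equality and is linear modulo it.\<close>
definition tensor_linear ::
  "('k::field \<Rightarrow> 'a::ab_group_add \<Rightarrow> 'a) \<Rightarrow> ('k \<Rightarrow> 'b::ab_group_add \<Rightarrow> 'b)
   \<Rightarrow> ('k \<Rightarrow> 'c::ab_group_add \<Rightarrow> 'c) \<Rightarrow> ('k \<Rightarrow> 'd::ab_group_add \<Rightarrow> 'd)
   \<Rightarrow> (('a \<times> 'b \<Rightarrow>\<^sub>0 'k) \<Rightarrow> ('c \<times> 'd \<Rightarrow>\<^sub>0 'k)) \<Rightarrow> bool" where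
  "tensor_linear s1 s2 t1 t2 F \<longleftrightarrow>
     (\<forall>x y. teq s1 s2 x y \<longrightarrow> teq t1 t2 (F x) (F y)) \<and>
     (\<forall>x y. teq t1 t2 (F (x + y)) (F x + F y)) \<and>
     (\<forall>c x. teq t1 t2 (F (fs_scale c x)) (fs_scale c (F x)))"

definition ten_map :: "('a \<Rightarrow> 'c) \<Rightarrow> ('b \<Rightarrow> 'd) \<Rightarrow> ('a \<times> 'b \<Rightarrow>\<^sub>0 'k::field) \<Rightarrow> ('c \<times> 'd \<Rightarrow>\<^sub>0 'k)" where
  "ten_map f g = fs_ext (\<lambda>(x, y). pt2 (f x) (g y))"

text \<open>f (x) m : X (x) Y (x) Z -> U (x) V, for f : X -> U and m : Y (x) Z -> V given as a bilinear map.\<close>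
definition ten3_1 :: "('x \<Rightarrow> 'u) \<Rightarrow> ('y \<Rightarrow> 'z \<Rightarrow> 'v) \<Rightarrow> ('x \<times> 'y \<times> 'z \<Rightarrow>\<^sub>0 'k::field) \<Rightarrow> ('u \<times> 'v \<Rightarrow>\<^sub>0 'k)" where
  "ten3_1 f m = fs_ext (\<lambda>(x, y, z). pt2 (f x) (m y z))"

text \<open>m (x) f : X (x) Y (x) Z -> U (x) V, for m : X (x) Y -> U given as a bilinear map and f : Z -> V.\<close>
definition ten3_2 :: "('x \<Rightarrow> 'y \<Rightarrow> 'u) \<Rightarrow> ('z \<Rightarrow> 'v) \<Rightarrow> ('x \<times> 'y \<times> 'z \<Rightarrow>\<^sub>0 'k::field) \<Rightarrow> ('u \<times> 'v \<Rightarrow>\<^sub>0 'k)" where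
  "ten3_2 m f = fs_ext (\<lambda>(x, y, z). pt2 (m x y) (f z))"

text \<open>F (x) id : X (x) Y (x) Z -> U (x) V (x) Z, for F : X (x) Y -> U (x) V.\<close>
definition map12 :: "(('x \<times> 'y \<Rightarrow>\<^sub>0 'k::field) \<Rightarrow> ('u \<times> 'v \<Rightarrow>\<^sub>0 'k))
    \<Rightarrow> ('x \<times> 'y \<times> 'z \<Rightarrow>\<^sub>0 'k) \<Rightarrow> ('u \<times> 'v \<times> 'z \<Rightarrow>\<^sub>0 'k)" where
  "map12 F = fs_ext (\<lambda>(x, y, z). fs_ext (\<lambda>(u, v). Poly_Mapping.single (u, v, z) 1) (F (pt2 x y)))"

text \<open>id (x) F : X (x) Y (x) Z -> X (x) U (x) V, for F : Y (x) Z -> U (x) V.\<close>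
definition map23 :: "(('y \<times> 'z \<Rightarrow>\<^sub>0 'k::field) \<Rightarrow> ('u \<times> 'v \<Rightarrow>\<^sub>0 'k))
    \<Rightarrow> ('x \<times> 'y \<times> 'z \<Rightarrow>\<^sub>0 'k) \<Rightarrow> ('x \<times> 'u \<times> 'v \<Rightarrow>\<^sub>0 'k)" where
  "map23 F = fs_ext (\<lambda>(x, y, z). fs_ext (\<lambda>(u, v). Poly_Mapping.single (x, u, v) 1) (F (pt2 y z)))"

text \<open>id (x) F (x) id : W (x) X (x) Y (x) Z -> W (x) U (x) V (x) Z, for F : X (x) Y -> U (x) V.\<close>
definition map_mid :: "(('x \<times> 'y \<Rightarrow>\<^sub>0 'k::field) \<Rightarrow> ('u \<times> 'v \<Rightarrow>\<^sub>0 'k))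
    \<Rightarrow> ('w \<times> 'x \<times> 'y \<times> 'z \<Rightarrow>\<^sub>0 'k) \<Rightarrow> ('w \<times> 'u \<times> 'v \<times> 'z \<Rightarrow>\<^sub>0 'k)" where
  "map_mid F = fs_ext (\<lambda>(w, x, y, z).
       fs_ext (\<lambda>(u, v). Poly_Mapping.single (w, u, v, z) 1) (F (pt2 x y)))"

text \<open>m1 (x) m2 : A (x) A' (x) B (x) B' -> C (x) D (grouped as (A (x) A') (x) (B (x) B')).\<close>
definition ten4_mult :: "('a \<Rightarrow> 'a' \<Rightarrow> 'c) \<Rightarrow> ('b \<Rightarrow> 'b' \<Rightarrow> 'd)
    \<Rightarrow> ('a \<times> 'a' \<times> 'b \<times> 'b' \<Rightarrow>\<^sub>0 'k::field) \<Rightarrow> ('c \<times> 'd \<Rightarrow>\<^sub>0 'k)" where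
  "ten4_mult m1 m2 = fs_ext (\<lambda>(a, a', b, b'). pt2 (m1 a a') (m2 b b'))"

text \<open>Non-unital associative algebra over 'k: the multiplication A (x) A -> A is a linear map,
i.e. a bilinear map A x A -> A.\<close>
definition bilinear_map :: "('k::field \<Rightarrow> 'a::ab_group_add \<Rightarrow> 'a) \<Rightarrow> ('a \<Rightarrow> 'a \<Rightarrow> 'a) \<Rightarrow> bool" where
  "bilinear_map s m \<longleftrightarrow> (\<forall>x. Vector_Spaces.linear s s (m x)) \<and> (\<forall>y. Vector_Spaces.linear s s (\<lambda>x. m x y))"

definition assoc_algebra :: "('k::field \<Rightarrow> 'a::ab_group_add \<Rightarrow> 'a) \<Rightarrow> ('a \<Rightarrow> 'a \<Rightarrow> 'a) \<Rightarrow> bool" where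
  "assoc_algebra s m \<longleftrightarrow> vector_space s \<and> bilinear_map s m \<and> (\<forall>x y z. m (m x y) z = m x (m y z))"

definition algebra_map :: "('k::field \<Rightarrow> 'a::ab_group_add \<Rightarrow> 'a) \<Rightarrow> ('a \<Rightarrow> 'a \<Rightarrow> 'a) \<Rightarrow> ('a \<Rightarrow> 'a) \<Rightarrow> bool" where
  "algebra_map s m f \<longleftrightarrow> Vector_Spaces.linear s s f \<and> (\<forall>x y. f (m x y) = m (f x) (f y))"

definition hom_assoc_algebra ::
  "('k::field \<Rightarrow> 'a::ab_group_add \<Rightarrow> 'a) \<Rightarrow> ('a \<Rightarrow> 'a \<Rightarrow> 'a) \<Rightarrow> ('a \<Rightarrow> 'a) \<Rightarrow> bool" where
  "hom_assoc_algebra s m \<alpha> \<longleftrightarrow> vector_space s \<and> bilinear_map s m \<and> Vector_Spaces.linear s s \<alpha> \<and>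
     (\<forall>x y. \<alpha> (m x y) = m (\<alpha> x) (\<alpha> y)) \<and>
     (\<forall>x y z. m (\<alpha> x) (m y z) = m (m x y) (\<alpha> z))"

text \<open>A_alpha = (A, alpha o mu, alpha).\<close>
definition hom_mult :: "('a \<Rightarrow> 'a \<Rightarrow> 'a) \<Rightarrow> ('a \<Rightarrow> 'a) \<Rightarrow> ('a \<Rightarrow> 'a \<Rightarrow> 'a)" where
  "hom_mult m \<alpha> = (\<lambda>x y. \<alpha> (m x y))"

definition twisting_map ::
  "('k::field \<Rightarrow> 'a::ab_group_add \<Rightarrow> 'a) \<Rightarrow> ('a \<Rightarrow> 'a \<Rightarrow> 'a)
   \<Rightarrow> ('k \<Rightarrow> 'b::ab_group_add \<Rightarrow> 'b) \<Rightarrow> ('b \<Rightarrow> 'b \<Rightarrow> 'b)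
   \<Rightarrow> (('b \<times> 'a \<Rightarrow>\<^sub>0 'k) \<Rightarrow> ('a \<times> 'b \<Rightarrow>\<^sub>0 'k)) \<Rightarrow> bool" where
  "twisting_map sA mA sB mB R \<longleftrightarrow>
     tensor_linear sB sA sA sB R \<and>
     (\<forall>w. teq sA sB (R (ten3_1 id mA w)) (ten3_2 mA id (map23 R (map12 R w)))) \<and>
     (\<forall>w. teq sA sB (R (ten3_2 mB id w)) (ten3_1 id mB (map12 R (map23 R w))))"

definition hom_twisting_map ::
  "('k::field \<Rightarrow> 'a::ab_group_add \<Rightarrow> 'a) \<Rightarrow> ('a \<Rightarrow> 'a \<Rightarrow> 'a) \<Rightarrow> ('a \<Rightarrow> 'a)
   \<Rightarrow> ('k \<Rightarrow> 'b::ab_group_add \<Rightarrow> 'b) \<Rightarrow> ('b \<Rightarrow> 'b \<Rightarrow> 'b) \<Rightarrow> ('b \<Rightarrow> 'b)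
   \<Rightarrow> (('b \<times> 'a \<Rightarrow>\<^sub>0 'k) \<Rightarrow> ('a \<times> 'b \<Rightarrow>\<^sub>0 'k)) \<Rightarrow> bool" where
  "hom_twisting_map sA mA \<alpha>A sB mB \<alpha>B R \<longleftrightarrow>
     tensor_linear sB sA sA sB R \<and>
     (\<forall>w. teq sA sB (ten_map \<alpha>A \<alpha>B (R w)) (R (ten_map \<alpha>B \<alpha>A w))) \<and>
     (\<forall>w. teq sA sB (R (ten3_1 \<alpha>B mA w)) (ten3_2 mA \<alpha>B (map23 R (map12 R w)))) \<and>
     (\<forall>w. teq sA sB (R (ten3_2 mB \<alpha>A w)) (ten3_1 \<alpha>A mB (map12 R (map23 R w))))"

text \<open>Product of the (Hom-)twisted tensor product: (mu_A (x) mu_B) o (id (x) R (x) id).\<close>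
definition twisted_mult ::
  "('a \<Rightarrow> 'a \<Rightarrow> 'a) \<Rightarrow> ('b \<Rightarrow> 'b \<Rightarrow> 'b) \<Rightarrow> (('b \<times> 'a \<Rightarrow>\<^sub>0 'k::field) \<Rightarrow> ('a \<times> 'b \<Rightarrow>\<^sub>0 'k))
   \<Rightarrow> ('a \<times> 'b \<times> 'a \<times> 'b \<Rightarrow>\<^sub>0 'k) \<Rightarrow> ('a \<times> 'b \<Rightarrow>\<^sub>0 'k)" where
  "twisted_mult mA mB R w = ten4_mult mA mB (map_mid R w)"

end

theory Submission
  imports Defs
begin

text \<open>Every product of a twisted algebra has the form \<open>\<alpha> \<circ> \<mu>\<close> with \<open>\<alpha>\<close> multiplicative, so the
structure maps can be pulled out of any composite of products and \<open>R\<close>.  Pulling them out of a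
Hom-twisting axiom leaves \<open>\<alpha>\<^sub>A \<otimes> \<alpha>\<^sub>B\<close> applied to the corresponding twisting axiom, which
survives because \<open>\<alpha>\<^sub>A \<otimes> \<alpha>\<^sub>B\<close> commutes with \<open>R\<close> and, being a tensor product of linear maps,
respects equality in the tensor product.  For the twisted product the same manipulation is a
literal identity of formal sums.\<close>

lemma lookup_fs_scale[simp]: "Poly_Mapping.lookup (fs_scale c v) k = c * Poly_Mapping.lookup v k"
  unfolding fs_scale_def by transfer (simp add: when_def)

lemma fs_module: "module (fs_scale :: 'k::field \<Rightarrow> ('x \<Rightarrow>\<^sub>0 'k) \<Rightarrow> _)"
  by unfold_locales (auto intro!: poly_mapping_eqI simp: Poly_Mapping.lookup_add algebra_simps)

lemma fs_scale_0[simp]: "fs_scale 0 v = 0" "fs_scale c 0 = 0"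
  by (auto intro!: poly_mapping_eqI)

lemma fs_scale_add: "fs_scale c (x + y) = fs_scale c x + fs_scale c y"
  "fs_scale (a + b) x = fs_scale a x + fs_scale b x"
  by (auto intro!: poly_mapping_eqI simp: Poly_Mapping.lookup_add algebra_simps)

lemma fs_scale_sum: "fs_scale c (sum f S) = (\<Sum>x\<in>S. fs_scale c (f x))"
  by (induct S rule: infinite_finite_induct) (auto simp: fs_scale_add)

lemma fs_ext_superset:
  assumes "finite K" "Poly_Mapping.keys v \<subseteq> K"
  shows "fs_ext g v = (\<Sum>x\<in>K. fs_scale (Poly_Mapping.lookup v x) (g x))"
  unfolding fs_ext_def
  by (rule sum.mono_neutral_left) (use assms in \<open>auto simp: in_keys_iff\<close>)

lemma fs_ext_add: "fs_ext g (x + y) = fs_ext g x + fs_ext g y"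
proof -
  let ?K = "Poly_Mapping.keys x \<union> Poly_Mapping.keys y"
  have "fs_ext g (x + y) = (\<Sum>k\<in>?K. fs_scale (Poly_Mapping.lookup (x+y) k) (g k))"
    by (rule fs_ext_superset) (auto simp: keys_add)
  also have "\<dots> = (\<Sum>k\<in>?K. fs_scale (Poly_Mapping.lookup x k) (g k)) + (\<Sum>k\<in>?K. fs_scale (Poly_Mapping.lookup y k) (g k))"
    by (simp add: Poly_Mapping.lookup_add fs_scale_add sum.distrib)
  also have "\<dots> = fs_ext g x + fs_ext g y"
    using fs_ext_superset[of ?K x g] fs_ext_superset[of ?K y g] by simp
  finally show ?thesis .
qed

lemma fs_ext_scale: "fs_ext g (fs_scale c x) = fs_scale c (fs_ext g x)"
proof -
  have "fs_ext g (fs_scale c x) = (\<Sum>k\<in>Poly_Mapping.keys x. fs_scale (Poly_Mapping.lookup (fs_scale c x) k) (g k))"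
    by (rule fs_ext_superset) (auto simp: in_keys_iff)
  also have "\<dots> = fs_scale c (fs_ext g x)"
    by (simp add: fs_ext_def fs_scale_sum module.scale_scale[OF fs_module])
  finally show ?thesis .
qed

lemma fs_ext_zero[simp]: "fs_ext g 0 = 0"
  by (simp add: fs_ext_def)

lemma fs_ext_single[simp]: "fs_ext g (Poly_Mapping.single k c) = fs_scale c (g k)"
  by (simp add: fs_ext_def)

lemma fs_ext_pt2[simp]: "fs_ext g (pt2 a b) = g (a, b)"
  by (simp add: pt2_def module.scale_one[OF fs_module])

lemma fs_ext_sum: "fs_ext g (sum f S) = (\<Sum>x\<in>S. fs_ext g (f x))"
  by (induct S rule: infinite_finite_induct) (auto simp: fs_ext_add)

lemma fs_ext_comp: "fs_ext h (fs_ext g v) = fs_ext (\<lambda>x. fs_ext h (g x)) v"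
proof -
  have "fs_ext h (fs_ext g v) = (\<Sum>x\<in>Poly_Mapping.keys v. fs_ext h (fs_scale (Poly_Mapping.lookup v x) (g x)))"
    by (simp only: fs_ext_def[of g v] fs_ext_sum)
  then show ?thesis by (simp add: fs_ext_scale fs_ext_def[of "\<lambda>x. fs_ext h (g x)" v])
qed

lemma fs_ext_hom: "module_hom fs_scale fs_scale (fs_ext g)"
  by (simp add: module_hom_iff fs_module fs_ext_add fs_ext_scale)

lemma fs_ext_diff: "fs_ext g (x - y) = fs_ext g x - fs_ext g y"
  using module_hom.diff[OF fs_ext_hom] by blast

lemma fs_scale_single: "fs_scale c (Poly_Mapping.single k 1) = Poly_Mapping.single k c"
  by (auto intro!: poly_mapping_eqI simp: Poly_Mapping.lookup_single when_def)

lemma teq_refl: "teq s1 s2 x x"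
  by (simp add: teq_def module.span_zero[OF fs_module])

lemma teq_sym: "teq s1 s2 x y \<Longrightarrow> teq s1 s2 y x"
  unfolding teq_def using module.span_neg[OF fs_module] by fastforce

lemma teq_trans: "teq s1 s2 x y \<Longrightarrow> teq s1 s2 y z \<Longrightarrow> teq s1 s2 x z"
  unfolding teq_def using module.span_add[OF fs_module] by fastforce

lemma ten_map_pt2[simp]: "ten_map f g (pt2 a b) = pt2 (f a) (g b)"
  by (simp add: ten_map_def)

lemma ten_map_single[simp]: "ten_map f g (Poly_Mapping.single (a, b) c) = Poly_Mapping.single (f a, g b) c"
  by (simp add: ten_map_def pt2_def fs_scale_single)

lemma ten_map_hom: "module_hom fs_scale fs_scale (ten_map f g)"
  unfolding ten_map_def by (rule fs_ext_hom)

lemma ten_map_diff: "ten_map f g (x - y) = ten_map f g x - ten_map f g y"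
  unfolding ten_map_def by (rule fs_ext_diff)

lemma ten_map_rel:
  assumes f: "Vector_Spaces.linear s1 t1 f" and g: "Vector_Spaces.linear s2 t2 g"
  shows "ten_map f g ` tensor_rel s1 s2 \<subseteq> tensor_rel t1 t2"
proof -
  have fa: "f (x + y) = f x + f y" "f (s1 c x) = t1 c (f x)" for x y c
    using f by (auto simp: module_hom_iff_linear[symmetric] module_hom_iff)
  have ga: "g (x + y) = g x + g y" "g (s2 c x) = t2 c (g x)" for x y c
    using g by (auto simp: module_hom_iff_linear[symmetric] module_hom_iff)
  show ?thesis
    unfolding tensor_rel_def
    by (auto simp: ten_map_diff fa ga; blast)
qed

lemma ten_map_teq:
  assumes f: "Vector_Spaces.linear s1 t1 f" and g: "Vector_Spaces.linear s2 t2 g"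
    and "teq s1 s2 x y"
  shows "teq t1 t2 (ten_map f g x) (ten_map f g y)"
proof -
  have "x - y \<in> module.span fs_scale (tensor_rel s1 s2)" using assms(3) by (simp add: teq_def)
  then have "ten_map f g (x - y) \<in> ten_map f g ` module.span fs_scale (tensor_rel s1 s2)" by blast
  also have "\<dots> = module.span fs_scale (ten_map f g ` tensor_rel s1 s2)"
    by (rule module_hom.span_image[OF ten_map_hom, symmetric])
  also have "\<dots> \<subseteq> module.span fs_scale (tensor_rel t1 t2)"
    by (rule module.span_mono[OF fs_module ten_map_rel[OF f g]])
  finally show ?thesis by (simp add: teq_def ten_map_diff)
qed

lemma ten_map_ten3_1: "ten_map f g (ten3_1 h m w) = ten3_1 (f \<circ> h) (\<lambda>y z. g (m y z)) w"
  unfolding ten_map_def ten3_1_def fs_ext_comp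
  by (rule arg_cong[where f="\<lambda>h. fs_ext h w"]) (auto simp: fun_eq_iff)

lemma ten_map_ten3_2: "ten_map f g (ten3_2 m h w) = ten3_2 (\<lambda>y z. f (m y z)) (g \<circ> h) w"
  unfolding ten_map_def ten3_2_def fs_ext_comp
  by (rule arg_cong[where f="\<lambda>h. fs_ext h w"]) (auto simp: fun_eq_iff)

lemma ten_map_ten4: "ten_map f g (ten4_mult m1 m2 w) = ten4_mult (\<lambda>y z. f (m1 y z)) (\<lambda>y z. g (m2 y z)) w"
  unfolding ten_map_def ten4_mult_def fs_ext_comp
  by (rule arg_cong[where f="\<lambda>h. fs_ext h w"]) (auto simp: fun_eq_iff)

lemma hom_assoc_algebra_hom_mult:
  assumes A: "assoc_algebra s m" and \<alpha>: "algebra_map s m \<alpha>"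
  shows "hom_assoc_algebra s (hom_mult m \<alpha>) \<alpha>"
proof -
  have lin: "Vector_Spaces.linear s s \<alpha>" and mult: "\<And>x y. \<alpha> (m x y) = m (\<alpha> x) (\<alpha> y)"
    using \<alpha> by (auto simp: algebra_map_def)
  have vs: "vector_space s" and bl: "bilinear_map s m" and assoc: "\<And>x y z. m (m x y) z = m x (m y z)"
    using A by (auto simp: assoc_algebra_def)
  have "bilinear_map s (hom_mult m \<alpha>)"
    using bl lin unfolding bilinear_map_def hom_mult_def
    by (auto intro: Vector_Spaces.linear_compose[unfolded o_def])
  then show ?thesis
    using vs lin unfolding hom_assoc_algebra_def hom_mult_def by (simp add: mult assoc)
qed

lemma hom_twisting_left:
  assumes lA: "Vector_Spaces.linear sA sA \<alpha>A" and lB: "Vector_Spaces.linear sB sB \<alpha>B"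
    and comm: "\<And>w. teq sA sB (ten_map \<alpha>A \<alpha>B (R w)) (R (ten_map \<alpha>B \<alpha>A w))"
    and twist: "\<And>w. teq sA sB (R (ten3_1 id mA w)) (ten3_2 mA id (map23 R (map12 R w)))"
  shows "teq sA sB (R (ten3_1 \<alpha>B (hom_mult mA \<alpha>A) w))
                   (ten3_2 (hom_mult mA \<alpha>A) \<alpha>B (map23 R (map12 R w)))"
proof -
  have lhs: "ten3_1 \<alpha>B (hom_mult mA \<alpha>A) w = ten_map \<alpha>B \<alpha>A (ten3_1 id mA w)"
    by (simp add: ten_map_ten3_1 hom_mult_def)
  have rhs: "ten3_2 (hom_mult mA \<alpha>A) \<alpha>B (map23 R (map12 R w))
           = ten_map \<alpha>A \<alpha>B (ten3_2 mA id (map23 R (map12 R w)))"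
    by (simp add: ten_map_ten3_2 hom_mult_def)
  show ?thesis unfolding lhs rhs
    by (rule teq_trans[OF teq_sym[OF comm] ten_map_teq[OF lA lB twist]])
qed

lemma hom_twisting_right:
  assumes lA: "Vector_Spaces.linear sA sA \<alpha>A" and lB: "Vector_Spaces.linear sB sB \<alpha>B"
    and comm: "\<And>w. teq sA sB (ten_map \<alpha>A \<alpha>B (R w)) (R (ten_map \<alpha>B \<alpha>A w))"
    and twist: "\<And>w. teq sA sB (R (ten3_2 mB id w)) (ten3_1 id mB (map12 R (map23 R w)))"
  shows "teq sA sB (R (ten3_2 (hom_mult mB \<alpha>B) \<alpha>A w))
                   (ten3_1 \<alpha>A (hom_mult mB \<alpha>B) (map12 R (map23 R w)))"
proof -
  have lhs: "ten3_2 (hom_mult mB \<alpha>B) \<alpha>A w = ten_map \<alpha>B \<alpha>A (ten3_2 mB id w)"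
    by (simp add: ten_map_ten3_2 hom_mult_def)
  have rhs: "ten3_1 \<alpha>A (hom_mult mB \<alpha>B) (map12 R (map23 R w))
           = ten_map \<alpha>A \<alpha>B (ten3_1 id mB (map12 R (map23 R w)))"
    by (simp add: ten_map_ten3_1 hom_mult_def)
  show ?thesis unfolding lhs rhs
    by (rule teq_trans[OF teq_sym[OF comm] ten_map_teq[OF lA lB twist]])
qed

lemma hom_twisting_map_of_twisting_map:
  assumes \<alpha>A: "algebra_map sA mA \<alpha>A" and \<alpha>B: "algebra_map sB mB \<alpha>B"
    and R: "twisting_map sA mA sB mB R"
    and comm: "\<And>w. teq sA sB (ten_map \<alpha>A \<alpha>B (R w)) (R (ten_map \<alpha>B \<alpha>A w))"
  shows "hom_twisting_map sA (hom_mult mA \<alpha>A) \<alpha>A sB (hom_mult mB \<alpha>B) \<alpha>B R"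
proof -
  have lA: "Vector_Spaces.linear sA sA \<alpha>A" and lB: "Vector_Spaces.linear sB sB \<alpha>B"
    using \<alpha>A \<alpha>B by (simp_all add: algebra_map_def)
  from R have tl: "tensor_linear sB sA sA sB R"
    and left: "\<And>w. teq sA sB (R (ten3_1 id mA w)) (ten3_2 mA id (map23 R (map12 R w)))"
    and right: "\<And>w. teq sA sB (R (ten3_2 mB id w)) (ten3_1 id mB (map12 R (map23 R w)))"
    by (simp_all add: twisting_map_def)
  show ?thesis
    using tl comm hom_twisting_left[OF lA lB comm left] hom_twisting_right[OF lA lB comm right]
    unfolding hom_twisting_map_def by blast
qed

lemma twisted_mult_hom_mult:
  "twisted_mult (hom_mult mA \<alpha>A) (hom_mult mB \<alpha>B) R w = ten_map \<alpha>A \<alpha>B (twisted_mult mA mB R w)"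
  by (simp add: twisted_mult_def ten_map_ten4 hom_mult_def)

theorem proposition2p10:
  fixes sA :: "'k::field \<Rightarrow> 'a::ab_group_add \<Rightarrow> 'a"
    and sB :: "'k \<Rightarrow> 'b::ab_group_add \<Rightarrow> 'b"
    and mA :: "'a \<Rightarrow> 'a \<Rightarrow> 'a" and mB :: "'b \<Rightarrow> 'b \<Rightarrow> 'b"
    and \<alpha>A :: "'a \<Rightarrow> 'a" and \<alpha>B :: "'b \<Rightarrow> 'b"
    and R :: "('b \<times> 'a \<Rightarrow>\<^sub>0 'k) \<Rightarrow> ('a \<times> 'b \<Rightarrow>\<^sub>0 'k)"
  assumes A: "assoc_algebra sA mA"
    and B: "assoc_algebra sB mB"
    and \<alpha>A: "algebra_map sA mA \<alpha>A"
    and \<alpha>B: "algebra_map sB mB \<alpha>B"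
    and R: "twisting_map sA mA sB mB R"
    and comm: "\<forall>w. teq sA sB (ten_map \<alpha>A \<alpha>B (R w)) (R (ten_map \<alpha>B \<alpha>A w))"
  shows "hom_assoc_algebra sA (hom_mult mA \<alpha>A) \<alpha>A
       \<and> hom_assoc_algebra sB (hom_mult mB \<alpha>B) \<alpha>B
       \<and> hom_twisting_map sA (hom_mult mA \<alpha>A) \<alpha>A sB (hom_mult mB \<alpha>B) \<alpha>B R
       \<and> (\<forall>w. teq sA sB (twisted_mult (hom_mult mA \<alpha>A) (hom_mult mB \<alpha>B) R w)
                         (ten_map \<alpha>A \<alpha>B (twisted_mult mA mB R w)))"
  using hom_assoc_algebra_hom_mult[OF A \<alpha>A] hom_assoc_algebra_hom_mult[OF B \<alpha>B]
    hom_twisting_map_of_twisting_map[OF \<alpha>A \<alpha>B R comm[rule_format]]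
  by (simp add: twisted_mult_hom_mult teq_refl)

end
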